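(* Let $A = A_s + A_i\epsilon\in\mathbb{DR}^{m\times n}$ with $m\ge n$ and $A_s$ of full column rank. Let $A_s = Q_sR_s$ be the thin QR decomposition of $A_s$, with $Q_s\in\mathbb{R}^{m\times n}$ having orthonormal columns and $R_s=(r_{s_{ij}})\in\mathbb{R}^{n\times n}$ upper triangular with positive diagonal entries. Put $B = Q_s^{\top}A_i = [b_1,\dots,b_n]$ ($b_j\in\mathbb{R}^n$). Define $P = [p_1,\dots,p_n]\in\mathbb{R}^{n\times n}$ with zero diagonal, strictly lower triangular part given by $$p_1(2{:}n) = b_1(2{:}n)/r_{s_{11}},\qquad p_k(k{+}1{:}n) = \Big(b_k(k{+}1{:}n) - \sum_{t=1}^{k-1} r_{s_{tk}}\,p_t(k{+}1{:}n)\Big)\Big/r_{s_{kk}},\quad k=2,\dots,n-1,$$ and $P^{\top} = -P$. Set $$Q_i = (I_m - Q_sQ_s^{\top})A_iR_s^{-1} + Q_sP,\qquad R_i = Q_s^{\top}A_i - PR_s.$$ Then $Q = Q_s+Q_i\epsilon\in\mathbb{DR}^{m\times n}$ is a dual matrix with orthonormal columns ($Q^{\top}Q = I_n$), $R = R_s + R_i\epsilon\in\mathbb{DR}^{n\times n}$ is an upper triangular dual matrix, and $A = QR$. Moreover, in any such thin QR decomposition $A=QR$ with standard parts $Q_s,R_s$, the infinitesimal parts have the form $Q_i = (I_m - Q_sQ_s^{\top})A_iR_s^{-1} + Q_sP$, $R_i = Q_s^{\top}A_i - PR_s$ for some skew-symmetric $P\in\mathbb{R}^{n\times n}$.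
   Context: A dual number is $a = a_s + a_i\epsilon$ with $a_s,a_i\in\mathbb{R}$, where $\epsilon^2=0$, $\epsilon\neq 0$; $\mathbb{DR}^{m\times n}$ denotes the set of dual matrices $A = A_s + A_i\epsilon$ with $A_s, A_i\in\mathbb{R}^{m\times n}$. Products use $\epsilon^2=0$: $(A_s+A_i\epsilon)(B_s+B_i\epsilon) = A_sB_s + (A_sB_i + A_iB_s)\epsilon$. The transpose is $A^{\top}=A_s^{\top}+A_i^{\top}\epsilon$. A dual matrix $Q\in\mathbb{DR}^{m\times n}$ has orthonormal columns if $Q^{\top}Q=I_n$ (equivalently $Q_s^{\top}Q_s=I_n$ and $Q_s^{\top}Q_i+Q_i^{\top}Q_s=O_n$). A dual matrix is upper triangular if both parts are upper triangular. For a vector $v$, $v(a{:}b)$ is the subvector of entries $a$ through $b$. *)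

theory Defs
  imports "Jordan_Normal_Form.DL_Rank" "Jordan_Normal_Form.Gauss_Jordan_Elimination"
begin

text \<open>Dual real matrices A = A_s + A_i eps are represented as pairs (A_s, A_i).\<close>
type_synonym dmat = "real mat \<times> real mat"

definition dual_carrier :: "nat \<Rightarrow> nat \<Rightarrow> dmat set" where
  "dual_carrier m n = {A. fst A \<in> carrier_mat m n \<and> snd A \<in> carrier_mat m n}"

definition dmult :: "dmat \<Rightarrow> dmat \<Rightarrow> dmat" where
  "dmult A B = (fst A * fst B, fst A * snd B + snd A * fst B)"

definition dtranspose :: "dmat \<Rightarrow> dmat" where
  "dtranspose A = (transpose_mat (fst A), transpose_mat (snd A))"

definition dual_one :: "nat \<Rightarrow> dmat" where
  "dual_one n = (1\<^sub>m n, 0\<^sub>m n n)"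

definition dual_orthonormal_cols :: "nat \<Rightarrow> dmat \<Rightarrow> bool" where
  "dual_orthonormal_cols n Q = (dmult (dtranspose Q) Q = dual_one n)"

definition dual_upper_triangular :: "dmat \<Rightarrow> bool" where
  "dual_upper_triangular R = (upper_triangular (fst R) \<and> upper_triangular (snd R))"

text \<open>Strictly lower part of P (0-indexed): entry (i,k) for k < i, given by
  p_k(i) = (b_k(i) - sum_{t<k} r_{tk} p_t(i)) / r_{kk}.\<close>
function plow :: "real mat \<Rightarrow> real mat \<Rightarrow> nat \<Rightarrow> nat \<Rightarrow> real" where
  "plow B R i k = (if k < i then
      (B $$ (i,k) - (\<Sum>t\<in>{..<k}. R $$ (t,k) * plow B R i t)) / R $$ (k,k) else 0)"
  by auto
termination by (relation "measure (\<lambda>(B,R,i,k). k)") auto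

definition Pmat :: "nat \<Rightarrow> real mat \<Rightarrow> real mat \<Rightarrow> real mat" where
  "Pmat n B R = mat n n (\<lambda>(i,j). if j < i then plow B R i j
                                else if i < j then - plow B R j i else 0)"

end

theory Submission
  imports Defs
begin

text \<open>Expanding \<open>Q\<^sup>T Q = I\<close> and \<open>A = Q R\<close> in \<open>\<epsilon>\<close> shows that \<open>P = Q\<^sub>s\<^sup>T Q\<^sub>i\<close> is
  skew-symmetric and \<open>A\<^sub>i = Q\<^sub>s R\<^sub>i + Q\<^sub>i R\<^sub>s\<close>. Splitting \<open>A\<^sub>i\<close> along the range of \<open>Q\<^sub>s\<close> and
  its orthogonal complement, the latter equation together with \<open>P\<close> determines \<open>Q\<^sub>i\<close> and
  \<open>R\<^sub>i = Q\<^sub>s\<^sup>T A\<^sub>i - P R\<^sub>s\<close>, and conversely every skew \<open>P\<close> yields a solution. Requiring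
  \<open>R\<^sub>i\<close> to be upper triangular is a triangular linear system for the strictly lower part
  of \<open>P\<close>, which is solved by forward substitution; skew-symmetry fixes the rest.\<close>

lemma mat_inverse_upper_triangular:
  fixes R :: "'a::field mat"
  assumes R: "R \<in> carrier_mat n n" and ut: "upper_triangular R"
    and diag: "\<forall>i<n. R $$ (i,i) \<noteq> 0"
  obtains R' where "mat_inverse R = Some R'" "R * R' = 1\<^sub>m n" "R' * R = 1\<^sub>m n"
    "R' \<in> carrier_mat n n"
proof -
  have "det R = prod_list (diag_mat R)" using det_upper_triangular[OF ut R] .
  moreover have "0 \<notin> set (diag_mat R)" using R diag by (auto simp: diag_mat_def)
  ultimately have "det R \<noteq> 0" by simp
  then have "mat_inverse R \<noteq> None"
    using mat_inverse(1)[OF R, of "()"] det_non_zero_imp_unit[OF R, of "()"] by blast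
  then show ?thesis using mat_inverse(2)[OF R] that by blast
qed

lemma add_eq_zero_mat_iff_eq_uminus:
  fixes X Y :: "'a::ab_group_add mat"
  assumes X: "X \<in> carrier_mat n k" and Y: "Y \<in> carrier_mat n k"
  shows "X + Y = 0\<^sub>m n k \<longleftrightarrow> Y = - X"
proof
  assume "X + Y = 0\<^sub>m n k"
  then have "X $$ (i,j) + Y $$ (i,j) = 0" if "i < n" "j < k" for i j
    using X Y that by (metis carrier_matD index_add_mat(1) index_zero_mat(1))
  then show "Y = - X" using X Y by (intro eq_matI) (auto simp: eq_neg_iff_add_eq_0 add.commute)
qed (use X Y in \<open>auto intro!: eq_matI\<close>)

lemma dual_orthonormal_cols_iff_skew:
  fixes Q_s Q_i :: "real mat"
  assumes Q_s: "Q_s \<in> carrier_mat m n" and Q_i: "Q_i \<in> carrier_mat m n"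
  shows "dual_orthonormal_cols n (Q_s, Q_i) \<longleftrightarrow>
    transpose_mat Q_s * Q_s = 1\<^sub>m n \<and>
    transpose_mat (transpose_mat Q_s * Q_i) = - (transpose_mat Q_s * Q_i)"
proof -
  let ?P = "transpose_mat Q_s * Q_i"
  have "transpose_mat ?P = transpose_mat Q_i * Q_s"
    using Q_s Q_i by (simp add: transpose_mult[of _ n m _ n])
  moreover have "?P + transpose_mat ?P = 0\<^sub>m n n \<longleftrightarrow> transpose_mat ?P = - ?P"
    using Q_s Q_i by (intro add_eq_zero_mat_iff_eq_uminus) auto
  ultimately show ?thesis
    unfolding dual_orthonormal_cols_def dmult_def dtranspose_def dual_one_def by auto
qed

lemma orthonormal_cols_projector_mult:
  fixes Q X :: "'a::comm_ring_1 mat"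
  assumes Q: "Q \<in> carrier_mat m n" and X: "X \<in> carrier_mat m k"
  shows "(1\<^sub>m m - Q * transpose_mat Q) * X = X - Q * (transpose_mat Q * X)"
proof -
  have "(1\<^sub>m m - Q * transpose_mat Q) * X = 1\<^sub>m m * X - (Q * transpose_mat Q) * X"
    using Q X by (intro minus_mult_distrib_mat) auto
  then show ?thesis using Q X by simp
qed

lemma orthonormal_cols_transpose_projector:
  fixes Q :: "'a::comm_ring_1 mat"
  assumes Q: "Q \<in> carrier_mat m n" and QQ: "transpose_mat Q * Q = 1\<^sub>m n"
  shows "transpose_mat Q * (1\<^sub>m m - Q * transpose_mat Q) = 0\<^sub>m n m"
proof -
  have T: "transpose_mat Q \<in> carrier_mat n m" using Q by simp
  have "transpose_mat Q * (1\<^sub>m m - Q * transpose_mat Q)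
        = transpose_mat Q * 1\<^sub>m m - transpose_mat Q * (Q * transpose_mat Q)"
    using Q by (intro mult_minus_distrib_mat) auto
  also have "transpose_mat Q * (Q * transpose_mat Q) = transpose_mat Q"
    using assoc_mult_mat[OF T Q T, symmetric] QQ T by simp
  finally show ?thesis using Q by (intro eq_matI) auto
qed

lemma mult_inverse_right_eq_iff:
  fixes X Y R R' :: "'a::semiring_1 mat"
  assumes X: "X \<in> carrier_mat k n" and Y: "Y \<in> carrier_mat k n"
    and R: "R \<in> carrier_mat n n" and R': "R' \<in> carrier_mat n n"
    and inv: "R * R' = 1\<^sub>m n" "R' * R = 1\<^sub>m n"
  shows "X * R' = Y \<longleftrightarrow> X = Y * R"
proof
  assume "X * R' = Y"
  then show "X = Y * R" using assoc_mult_mat[OF X R' R] inv X by simp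
next
  assume "X = Y * R"
  then show "X * R' = Y" using assoc_mult_mat[OF Y R R'] inv Y by simp
qed

lemma dual_qr_infinitesimal_parts_eq:
  fixes Q_s Q_i R_s R_i R_s' A_i P :: "'a::comm_ring_1 mat"
  assumes Q_s: "Q_s \<in> carrier_mat m n" and Q_i: "Q_i \<in> carrier_mat m n"
    and R_s: "R_s \<in> carrier_mat n n" and R_i: "R_i \<in> carrier_mat n n"
    and P: "P \<in> carrier_mat n n" and R_s': "R_s' \<in> carrier_mat n n"
    and QQ: "transpose_mat Q_s * Q_s = 1\<^sub>m n"
    and inv: "R_s * R_s' = 1\<^sub>m n" "R_s' * R_s = 1\<^sub>m n"
    and A_i: "A_i = Q_s * R_i + Q_i * R_s" and TQ_i: "transpose_mat Q_s * Q_i = P"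
  shows "Q_i = (1\<^sub>m m - Q_s * transpose_mat Q_s) * A_i * R_s' + Q_s * P"
    and "R_i = transpose_mat Q_s * A_i - P * R_s"
proof -
  let ?T = "transpose_mat Q_s"
  have T: "?T \<in> carrier_mat n m" using Q_s by simp
  have A_i_carrier: "A_i \<in> carrier_mat m n" using A_i Q_s Q_i R_s R_i by simp
  have TA: "?T * A_i = R_i + P * R_s"
    using A_i TQ_i mult_add_distrib_mat[OF T, of "Q_s * R_i" n "Q_i * R_s"] Q_s R_i Q_i R_s
      assoc_mult_mat[OF T Q_s R_i] QQ assoc_mult_mat[OF T Q_i R_s] by simp
  have "(1\<^sub>m m - Q_s * ?T) * A_i = A_i - Q_s * (?T * A_i)"
    using orthonormal_cols_projector_mult[OF Q_s A_i_carrier] .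
  also have "\<dots> = (Q_i - Q_s * P) * R_s"
  proof -
    have "Q_s * (?T * A_i) = Q_s * R_i + Q_s * P * R_s"
      unfolding TA using Q_s R_i P R_s by (simp add: mult_add_distrib_mat assoc_mult_mat)
    moreover have "(Q_i - Q_s * P) * R_s = Q_i * R_s - Q_s * P * R_s"
      using Q_i Q_s P R_s by (intro minus_mult_distrib_mat) auto
    ultimately show ?thesis using A_i Q_s Q_i R_s R_i P by (auto intro!: eq_matI)
  qed
  moreover have "(1\<^sub>m m - Q_s * ?T) * A_i \<in> carrier_mat m n"
    and Q_i_P: "Q_i - Q_s * P \<in> carrier_mat m n"
    using Q_s A_i_carrier Q_i P by (auto intro!: minus_carrier_mat)
  ultimately have "(1\<^sub>m m - Q_s * ?T) * A_i * R_s' = Q_i - Q_s * P"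
    using mult_inverse_right_eq_iff[OF _ Q_i_P R_s R_s' inv] by simp
  then show "Q_i = (1\<^sub>m m - Q_s * ?T) * A_i * R_s' + Q_s * P"
    using Q_i Q_s P by (auto intro!: eq_matI)
  show "R_i = ?T * A_i - P * R_s"
    unfolding TA using R_i P R_s by (auto intro!: eq_matI)
qed

lemma dual_qr_infinitesimal_parts_of_eq:
  fixes Q_s R_s R_s' A_i P :: "'a::comm_ring_1 mat"
  assumes Q_s: "Q_s \<in> carrier_mat m n" and A_i: "A_i \<in> carrier_mat m n"
    and R_s: "R_s \<in> carrier_mat n n" and P: "P \<in> carrier_mat n n"
    and R_s': "R_s' \<in> carrier_mat n n"
    and QQ: "transpose_mat Q_s * Q_s = 1\<^sub>m n"
    and inv: "R_s * R_s' = 1\<^sub>m n" "R_s' * R_s = 1\<^sub>m n"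
  defines "Q_i \<equiv> (1\<^sub>m m - Q_s * transpose_mat Q_s) * A_i * R_s' + Q_s * P"
    and "R_i \<equiv> transpose_mat Q_s * A_i - P * R_s"
  shows "A_i = Q_s * R_i + Q_i * R_s" and "transpose_mat Q_s * Q_i = P"
proof -
  let ?T = "transpose_mat Q_s"
  let ?M = "1\<^sub>m m - Q_s * ?T"
  have T: "?T \<in> carrier_mat n m" using Q_s by simp
  have M: "?M \<in> carrier_mat m m" using Q_s by auto
  have Q_i: "Q_i \<in> carrier_mat m n" unfolding Q_i_def using M A_i R_s' Q_s P by simp
  have "?M * A_i * R_s' = Q_i - Q_s * P"
    unfolding Q_i_def using M A_i R_s' Q_s P by (auto intro!: eq_matI)
  moreover have "?M * A_i \<in> carrier_mat m n"
    and Q_i_P: "Q_i - Q_s * P \<in> carrier_mat m n"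
    using M A_i Q_i Q_s P by (auto intro!: minus_carrier_mat)
  ultimately have MA: "?M * A_i = (Q_i - Q_s * P) * R_s"
    using mult_inverse_right_eq_iff[OF _ Q_i_P R_s R_s' inv] by simp
  have "?T * Q_i = ?T * (?M * A_i * R_s') + ?T * (Q_s * P)"
    unfolding Q_i_def
    using mult_add_distrib_mat[OF T _ mult_carrier_mat[OF Q_s P], of "?M * A_i * R_s'"] M A_i R_s'
    by fastforce
  also have "?T * (?M * A_i * R_s') = ?T * ?M * A_i * R_s'"
    using assoc_mult_mat[OF T mult_carrier_mat[OF M A_i] R_s'] assoc_mult_mat[OF T M A_i] by simp
  finally show "?T * Q_i = P"
    using orthonormal_cols_transpose_projector[OF Q_s QQ] assoc_mult_mat[OF T Q_s P] QQ A_i R_s' P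
    by simp
  have "A_i = ?M * A_i + Q_s * (?T * A_i)"
    using orthonormal_cols_projector_mult[OF Q_s A_i] A_i Q_s by (auto intro!: eq_matI)
  also have "\<dots> = Q_s * R_i + Q_i * R_s"
  proof -
    have "Q_s * R_i = Q_s * (?T * A_i) - Q_s * P * R_s"
      unfolding R_i_def
      using mult_minus_distrib_mat[OF Q_s mult_carrier_mat[OF T A_i] mult_carrier_mat[OF P R_s]]
        assoc_mult_mat[OF Q_s P R_s] by simp
    moreover have "(Q_i - Q_s * P) * R_s = Q_i * R_s - Q_s * P * R_s"
      using Q_i Q_s P R_s by (intro minus_mult_distrib_mat) auto
    ultimately show ?thesis unfolding MA using Q_s Q_i R_s P A_i by (auto intro!: eq_matI)
  qed
  finally show "A_i = Q_s * R_i + Q_i * R_s" .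
qed

declare plow.simps[simp del]

lemma Pmat_carrier [simp]: "Pmat n B R \<in> carrier_mat n n"
  unfolding Pmat_def by simp

lemma transpose_Pmat: "transpose_mat (Pmat n B R) = - Pmat n B R"
  unfolding Pmat_def by (intro eq_matI) auto

text \<open>For \<open>j < i\<close>, entry \<open>(i,j)\<close> of \<open>P R\<close> only involves \<open>p\<^sub>t(i)\<close> with \<open>t \<le> j\<close>, i.e. the
  strictly lower part of \<open>P\<close>, and the recursion of \<open>plow\<close> is the equation
  \<open>(P R)(i,j) = B(i,j)\<close> solved for \<open>p\<^sub>j(i)\<close>.\<close>

lemma upper_triangular_minus_Pmat_mult:
  fixes B R :: "real mat"
  assumes B: "B \<in> carrier_mat n n" and R: "R \<in> carrier_mat n n" and ut: "upper_triangular R"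
    and diag: "\<forall>i<n. R $$ (i,i) \<noteq> 0"
  shows "upper_triangular (B - Pmat n B R * R)"
  unfolding upper_triangular_def
proof (intro allI impI)
  fix i j assume i: "i < dim_row (B - Pmat n B R * R)" and ji: "j < i"
  have i_n: "i < n" using i B by (simp add: Pmat_def)
  have j_n: "j < n" using ji i_n by simp
  let ?P = "Pmat n B R"
  let ?f = "\<lambda>t. ?P $$ (i,t) * R $$ (t,j)"
  have "(?P * R) $$ (i,j) = (\<Sum>t\<in>{0..<n}. ?f t)"
    using i_n j_n R by (simp add: Pmat_def scalar_prod_def)
  also have "\<dots> = (\<Sum>t\<in>{0..<Suc j}. ?f t)"
    using ut R j_n by (intro sum.mono_neutral_right) (auto simp: upper_triangular_def)
  also have "\<dots> = (\<Sum>t<j. R $$ (t,j) * plow B R i t) + R $$ (j,j) * plow B R i j"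
    using i_n ji by (simp add: atLeast0LessThan Pmat_def mult.commute)
  also have "\<dots> = B $$ (i,j)"
    using diag j_n ji by (subst (2) plow.simps) simp
  finally show "(B - ?P * R) $$ (i,j) = 0" using i_n j_n B R by (simp add: Pmat_def)
qed

locale thin_qr_standard_parts =
  fixes m n :: nat and A_s A_i Q_s R_s :: "real mat"
  assumes A_i: "A_i \<in> carrier_mat m n"
    and Q_s: "Q_s \<in> carrier_mat m n" and R_s: "R_s \<in> carrier_mat n n"
    and orthonormal: "transpose_mat Q_s * Q_s = 1\<^sub>m n"
    and upper: "upper_triangular R_s" and diag: "\<forall>i<n. R_s $$ (i,i) \<noteq> 0"
    and A_s: "A_s = Q_s * R_s"
begin

abbreviation "Q_i_of P \<equiv> (1\<^sub>m m - Q_s * transpose_mat Q_s) * A_i * the (mat_inverse R_s) + Q_s * P"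

abbreviation "R_i_of P \<equiv> transpose_mat Q_s * A_i - P * R_s"

lemma dual_qr_iff_skew:
  "(Q_s, Q_i) \<in> dual_carrier m n \<and> (R_s, R_i) \<in> dual_carrier n n
    \<and> dual_orthonormal_cols n (Q_s, Q_i) \<and> dual_upper_triangular (R_s, R_i)
    \<and> (A_s, A_i) = dmult (Q_s, Q_i) (R_s, R_i) \<longleftrightarrow>
   (\<exists>P \<in> carrier_mat n n. transpose_mat P = - P \<and> Q_i = Q_i_of P \<and> R_i = R_i_of P
      \<and> upper_triangular (R_i_of P))"
proof -
  obtain R_s' where inv: "mat_inverse R_s = Some R_s'" "R_s * R_s' = 1\<^sub>m n" "R_s' * R_s = 1\<^sub>m n"
    and R_s': "R_s' \<in> carrier_mat n n"
    using mat_inverse_upper_triangular[OF R_s upper diag] by blast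
  have T: "transpose_mat Q_s \<in> carrier_mat n m" using Q_s by simp
  have carriers: "Q_i_of P \<in> carrier_mat m n" "R_i_of P \<in> carrier_mat n n"
    if "P \<in> carrier_mat n n" for P
    using that Q_s R_s A_i R_s' inv(1)
    by (auto intro!: add_carrier_mat minus_carrier_mat mult_carrier_mat[of _ m m]
        mult_carrier_mat[of _ n n] mult_carrier_mat[OF T])
  show ?thesis
  proof
    assume dual_qr: "(Q_s, Q_i) \<in> dual_carrier m n \<and> (R_s, R_i) \<in> dual_carrier n n
      \<and> dual_orthonormal_cols n (Q_s, Q_i) \<and> dual_upper_triangular (R_s, R_i)
      \<and> (A_s, A_i) = dmult (Q_s, Q_i) (R_s, R_i)"
    then have Q_i: "Q_i \<in> carrier_mat m n" and R_i: "R_i \<in> carrier_mat n n"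
      and A_i_eq: "A_i = Q_s * R_i + Q_i * R_s" and "upper_triangular R_i"
      by (auto simp: dual_carrier_def dual_upper_triangular_def dmult_def)
    let ?P = "transpose_mat Q_s * Q_i"
    have P: "?P \<in> carrier_mat n n" using Q_s Q_i by simp
    have "transpose_mat ?P = - ?P"
      using dual_qr dual_orthonormal_cols_iff_skew[OF Q_s Q_i] by blast
    moreover have "Q_i = Q_i_of ?P \<and> R_i = R_i_of ?P"
      using dual_qr_infinitesimal_parts_eq[OF Q_s Q_i R_s R_i P R_s' orthonormal inv(2,3) A_i_eq]
        inv(1) by simp
    ultimately show "\<exists>P \<in> carrier_mat n n. transpose_mat P = - P \<and> Q_i = Q_i_of P
      \<and> R_i = R_i_of P \<and> upper_triangular (R_i_of P)"
      using P \<open>upper_triangular R_i\<close> by metis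
  next
    assume "\<exists>P \<in> carrier_mat n n. transpose_mat P = - P \<and> Q_i = Q_i_of P \<and> R_i = R_i_of P
      \<and> upper_triangular (R_i_of P)"
    then obtain P where P: "P \<in> carrier_mat n n" and skew: "transpose_mat P = - P"
      and Q_i_eq: "Q_i = Q_i_of P" and R_i_eq: "R_i = R_i_of P" and "upper_triangular R_i"
      by blast
    have Q_i: "Q_i \<in> carrier_mat m n" and R_i: "R_i \<in> carrier_mat n n"
      using carriers[OF P] Q_i_eq R_i_eq by simp_all
    have "A_i = Q_s * R_i + Q_i * R_s \<and> transpose_mat Q_s * Q_i = P"
      using dual_qr_infinitesimal_parts_of_eq[OF Q_s A_i R_s P R_s' orthonormal inv(2,3)]
        Q_i_eq R_i_eq inv(1) by simp
    then show "(Q_s, Q_i) \<in> dual_carrier m n \<and> (R_s, R_i) \<in> dual_carrier n n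
      \<and> dual_orthonormal_cols n (Q_s, Q_i) \<and> dual_upper_triangular (R_s, R_i)
      \<and> (A_s, A_i) = dmult (Q_s, Q_i) (R_s, R_i)"
      using Q_i R_i Q_s R_s skew orthonormal upper A_s \<open>upper_triangular R_i\<close>
        dual_orthonormal_cols_iff_skew[OF Q_s Q_i]
      by (auto simp: dual_carrier_def dual_upper_triangular_def dmult_def)
  qed
qed

end

theorem theorem3p2:
  fixes m n :: nat and A_s A_i Q_s R_s :: "real mat"
  assumes "A_s \<in> carrier_mat m n" and "A_i \<in> carrier_mat m n" and "m \<ge> n"
    and "vec_space.rank m A_s = n"
    and "Q_s \<in> carrier_mat m n" and "R_s \<in> carrier_mat n n"
    and "transpose_mat Q_s * Q_s = 1\<^sub>m n"
    and "upper_triangular R_s" and "\<forall>i<n. R_s $$ (i,i) > 0"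
    and "A_s = Q_s * R_s"
  shows "(let B = transpose_mat Q_s * A_i;
             P = Pmat n B R_s;
             Q_i = (1\<^sub>m m - Q_s * transpose_mat Q_s) * A_i * the (mat_inverse R_s) + Q_s * P;
             R_i = transpose_mat Q_s * A_i - P * R_s
         in (Q_s, Q_i) \<in> dual_carrier m n \<and> (R_s, R_i) \<in> dual_carrier n n
            \<and> dual_orthonormal_cols n (Q_s, Q_i)
            \<and> dual_upper_triangular (R_s, R_i)
            \<and> (A_s, A_i) = dmult (Q_s, Q_i) (R_s, R_i))
         \<and> (\<forall>Q_i R_i. (Q_s, Q_i) \<in> dual_carrier m n \<and> (R_s, R_i) \<in> dual_carrier n n
            \<and> dual_orthonormal_cols n (Q_s, Q_i)
            \<and> dual_upper_triangular (R_s, R_i)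
            \<and> (A_s, A_i) = dmult (Q_s, Q_i) (R_s, R_i)
          \<longrightarrow> (\<exists>P \<in> carrier_mat n n. transpose_mat P = - P
                \<and> Q_i = (1\<^sub>m m - Q_s * transpose_mat Q_s) * A_i * the (mat_inverse R_s) + Q_s * P
                \<and> R_i = transpose_mat Q_s * A_i - P * R_s))"
proof -
  interpret thin_qr_standard_parts m n A_s A_i Q_s R_s
    using assms by unfold_locales auto
  have "upper_triangular (R_i_of (Pmat n (transpose_mat Q_s * A_i) R_s))"
    using upper_triangular_minus_Pmat_mult[OF _ R_s upper diag] Q_s A_i by simp
  then have "\<exists>P \<in> carrier_mat n n. transpose_mat P = - P
      \<and> Q_i_of (Pmat n (transpose_mat Q_s * A_i) R_s) = Q_i_of P
      \<and> R_i_of (Pmat n (transpose_mat Q_s * A_i) R_s) = R_i_of P \<and> upper_triangular (R_i_of P)"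
    using Pmat_carrier transpose_Pmat by blast
  then show ?thesis
    unfolding Let_def dual_qr_iff_skew by blast
qed

end
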